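(* Let $\sigma>0$, $\eta>0$, $\hat\alpha>0$, $h>0$, $r\ge0$, $a\in\mathbb{R}$, and let $\chi$ be a one-dimensional Brownian motion with drift $a$, variance $\sigma^2$ and $\chi(0)\ge0$. Let $(\beta^*,v)$ be a pair with $\beta^*>0$, $v\in C^1[0,\infty)$, $\beta^*=-\frac{\hat\alpha}4v(y)^2+\frac12\sigma^2v'(y)-\eta yv(y)+av(y)+hy$ for all $y\ge0$, $v(0)=-r$, $v$ nondecreasing with $\lim_{y\to\infty}v(y)=h/\eta$, and let $\theta^*(w)=\frac{\hat\alpha}2v(w)$. Let $W^*$ be the workload process under $\theta^*$, i.e. $W^*(t)=\chi(t)-\eta\int_0^tW^*(s)ds-\int_0^t\theta^*(W^*(s))ds+L(t)$ with $W^*\ge0$, $L$ nondecreasing, $L(0)=0$ and $L$ increasing only when $W^*=0$. Then $\theta^*$ is admissible, i.e. $\lim_{t\to\infty}E[W^*(t)]/t=0$.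
   Context: Admissibility of a stationary Markov policy $\theta$ in this workload control problem means that the associated work-conserving reflected workload process $W$ (with $L$ increasing only when $W=0$) satisfies $\lim_{t\to\infty}E[W(t)]/t=0$. *)

theory Defs
  imports "HOL-Probability.Probability"
begin

definition brownian_motion_drift ::
  "'w measure \<Rightarrow> (real \<Rightarrow> 'w \<Rightarrow> real) \<Rightarrow> real \<Rightarrow> real \<Rightarrow> real \<Rightarrow> bool" where
  "brownian_motion_drift M X x a \<sigma> \<longleftrightarrow>
     prob_space M \<and>
     (\<forall>t\<ge>0. X t \<in> borel_measurable M) \<and>
     (\<forall>\<omega>\<in>space M. X 0 \<omega> = x) \<and>
     (\<forall>\<omega>\<in>space M. continuous_on {0..} (\<lambda>t. X t \<omega>)) \<and>
     (\<forall>s t. 0 \<le> s \<and> s < t \<longrightarrow>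
        distributed M lborel (\<lambda>\<omega>. X t \<omega> - X s \<omega>)
          (\<lambda>y. ennreal (normal_density (a * (t - s)) (\<sigma> * sqrt (t - s)) y))) \<and>
     (\<forall>(tt :: nat \<Rightarrow> real) n. 0 \<le> tt 0 \<and> strict_mono tt \<longrightarrow>
        prob_space.indep_vars M (\<lambda>_. borel) (\<lambda>i \<omega>. X (tt (Suc i)) \<omega> - X (tt i) \<omega>) {..<n})"

definition workload_process ::
  "'w measure \<Rightarrow> (real \<Rightarrow> 'w \<Rightarrow> real) \<Rightarrow> real \<Rightarrow> (real \<Rightarrow> real)
    \<Rightarrow> (real \<Rightarrow> 'w \<Rightarrow> real) \<Rightarrow> (real \<Rightarrow> 'w \<Rightarrow> real) \<Rightarrow> bool" where
  "workload_process M chi \<eta> \<theta> W L \<longleftrightarrow>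
     (\<forall>t\<ge>0. W t \<in> borel_measurable M) \<and>
     (\<forall>\<omega>\<in>space M.
        continuous_on {0..} (\<lambda>t. W t \<omega>) \<and>
        continuous_on {0..} (\<lambda>t. L t \<omega>) \<and>
        (\<forall>t\<ge>0. W t \<omega> = chi t \<omega> - \<eta> * integral {0..t} (\<lambda>s. W s \<omega>)
                      - integral {0..t} (\<lambda>s. \<theta> (W s \<omega>)) + L t \<omega>) \<and>
        (\<forall>t\<ge>0. W t \<omega> \<ge> 0) \<and>
        L 0 \<omega> = 0 \<and>
        mono_on {0..} (\<lambda>t. L t \<omega>) \<and>
        (\<forall>s t. 0 \<le> s \<and> s < t \<and> (\<forall>u\<in>{s..t}. W u \<omega> > 0) \<longrightarrow> L t \<omega> = L s \<omega>))"

definition admissible_workload :: "'w measure \<Rightarrow> (real \<Rightarrow> 'w \<Rightarrow> real) \<Rightarrow> bool" where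
  "admissible_workload M W \<longleftrightarrow>
     (\<forall>t\<ge>0. integrable M (W t)) \<and>
     ((\<lambda>t. (\<integral>\<omega>. W t \<omega> \<partial>M) / t) \<longlongrightarrow> 0) at_top"

end

theory Submission
  imports Defs "HOL-Real_Asymp.Real_Asymp"
begin

(* Since v is nondecreasing with v 0 = -r, the control is bounded below by -\<alpha> r / 2, so above
   a high enough level K the drift of the workload is below a. Looking back from time t to the
   last time s at which W was at most K, the regulator L is constant on [s, t] and
   W t \<le> K + B t - B s with B u = chi u - a u. Hence E[W t] \<le> K + 2 E[sup over [0, t] of |B - x|],
   and chaining over dyadic points with fourth moments of the Gaussian increments (only their
   marginal laws are used, not their independence) bounds this expected supremum by 133 \<sigma> sqrt t.
   So E[W t] grows at most like sqrt t. *)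

lemma abs_le_add_power4_div_cube:
  fixes y c :: real
  assumes "c > 0"
  shows "\<bar>y\<bar> \<le> c + y ^ 4 / c ^ 3"
proof (cases "\<bar>y\<bar> \<le> c")
  case True
  then show ?thesis using assms by (simp add: add_increasing2)
next
  case False
  then have "c ^ 3 \<le> \<bar>y\<bar> ^ 3" using assms by (intro power_mono) auto
  then have "\<bar>y\<bar> * c ^ 3 \<le> y ^ 4"
    using mult_left_mono[of "c ^ 3" "\<bar>y\<bar> ^ 3" "\<bar>y\<bar>"] by (simp add: power_abs eval_nat_numeral)
  then have "\<bar>y\<bar> \<le> y ^ 4 / c ^ 3" using assms by (simp add: pos_le_divide_eq)
  then show ?thesis using assms by linarith
qed

definition dyadic_increment :: "(real \<Rightarrow> real) \<Rightarrow> real \<Rightarrow> nat \<Rightarrow> nat \<Rightarrow> real" where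
  "dyadic_increment B t m j = B (t * real (Suc j) / 2 ^ m) - B (t * real j / 2 ^ m)"

lemma abs_dyadic_le_sum_increment_bounds:
  fixes B :: "real \<Rightarrow> real" and P :: "nat \<Rightarrow> real"
  assumes "B 0 = 0"
    and incr: "\<And>m j. j < 2 ^ m \<Longrightarrow> \<bar>dyadic_increment B t m j\<bar> \<le> P m"
    and "k \<le> 2 ^ n"
  shows "\<bar>B (t * real k / 2 ^ n)\<bar> \<le> (\<Sum>m\<le>n. P m)"
  using \<open>k \<le> 2 ^ n\<close>
proof (induction n arbitrary: k)
  case 0
  then show ?case using \<open>B 0 = 0\<close> incr[of 0 0] by (cases k) (auto simp: dyadic_increment_def)
next
  case (Suc n)
  have "0 \<le> P (Suc n)" using incr[of 0 "Suc n"] by simp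
  obtain k' where "k = 2 * k' \<or> k = Suc (2 * k')" by (metis oddE evenE Suc_eq_plus1)
  then show ?case
  proof
    assume "k = 2 * k'"
    then have "\<bar>B (t * real k' / 2 ^ n)\<bar> \<le> (\<Sum>m\<le>n. P m)" using Suc by (intro Suc.IH) simp
    then show ?thesis using \<open>k = 2 * k'\<close> \<open>0 \<le> P (Suc n)\<close> by simp
  next
    assume k: "k = Suc (2 * k')"
    then have "\<bar>B (t * real k' / 2 ^ n)\<bar> \<le> (\<Sum>m\<le>n. P m)" using Suc by (intro Suc.IH) simp
    moreover have "\<bar>B (t * real k / 2 ^ Suc n) - B (t * real k' / 2 ^ n)\<bar> \<le> P (Suc n)"
      using incr[of "2 * k'" "Suc n"] Suc.prems k by (simp add: dyadic_increment_def)
    ultimately show ?thesis by simp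
  qed
qed

lemma abs_le_if_abs_le_on_dyadics:
  fixes B :: "real \<Rightarrow> real"
  assumes "t > 0" and "continuous_on {0..t} B"
    and dyadic: "\<And>n k. k \<le> 2 ^ n \<Longrightarrow> \<bar>B (t * real k / 2 ^ n)\<bar> \<le> g"
    and "r \<in> {0..t}"
  shows "\<bar>B r\<bar> \<le> g"
proof -
  define S where "S = {0..1} \<inter> (\<lambda>u. \<bar>B (t * u)\<bar>) -` {..g}"
  have "continuous_on {0..1} (\<lambda>u. B (t * u))"
    using \<open>t > 0\<close> by (intro continuous_on_compose2[OF assms(2)] continuous_intros)
      (auto simp: mult_le_cancel_left1)
  then have "closed S"
    unfolding S_def by (intro continuous_closed_preimage continuous_intros) auto
  have "real m / 2 ^ k \<in> S" if "real m / 2 ^ k \<in> {0..1::real}" for k m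
  proof -
    have "real m \<le> 2 ^ k" using that by (simp add: divide_le_eq_1)
    then have "m \<le> 2 ^ k" by (metis of_nat_le_iff of_nat_numeral of_nat_power)
    then have "\<bar>B (t * real m / 2 ^ k)\<bar> \<le> g" by (rule dyadic)
    then show ?thesis using that unfolding S_def by simp
  qed
  then have "{0..1} \<inter> (\<Union>k m. {real m / 2 ^ k}) \<subseteq> S" by blast
  then have "closure ({0..1} \<inter> (\<Union>k m. {real m / 2 ^ k})) \<subseteq> S"
    using \<open>closed S\<close> by (rule closure_minimal)
  then have "{0..1} \<subseteq> S"
    using closure_dyadic_rationals_in_convex_set_pos_1[of "{0..1::real}"] by simp
  moreover have "r / t \<in> {0..1}" using \<open>t > 0\<close> \<open>r \<in> {0..t}\<close> by auto
  ultimately have "\<bar>B (t * (r / t))\<bar> \<le> g" unfolding S_def by blast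
  then show ?thesis using \<open>t > 0\<close> by simp
qed

definition chaining_majorant :: "(real \<Rightarrow> real) \<Rightarrow> real \<Rightarrow> (nat \<Rightarrow> real) \<Rightarrow> ennreal" where
  "chaining_majorant B t c =
     (\<Sum>m. ennreal (c m + (\<Sum>j<2 ^ m. dyadic_increment B t m j ^ 4) / c m ^ 3))"

lemma abs_le_chaining_majorant:
  fixes B :: "real \<Rightarrow> real"
  assumes "t > 0" "continuous_on {0..t} B" "B 0 = 0" "\<And>m. c m > 0" "r \<in> {0..t}"
  shows "ennreal \<bar>B r\<bar> \<le> chaining_majorant B t c"
proof (cases "chaining_majorant B t c = \<top>")
  case False
  define P where "P m = c m + (\<Sum>j<2 ^ m. dyadic_increment B t m j ^ 4) / c m ^ 3" for m
  define g where "g = enn2real (chaining_majorant B t c)"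
  have "0 \<le> P m" for m
    unfolding P_def using assms(4)[of m] by (intro add_nonneg_nonneg sum_nonneg divide_nonneg_pos) auto
  have incr: "\<bar>dyadic_increment B t m j\<bar> \<le> P m" if "j < 2 ^ m" for m j
  proof -
    have "\<bar>dyadic_increment B t m j\<bar> \<le> c m + dyadic_increment B t m j ^ 4 / c m ^ 3"
      by (rule abs_le_add_power4_div_cube[OF assms(4)])
    also have "\<dots> \<le> P m"
      unfolding P_def using that assms(4)[of m]
      by (intro add_left_mono divide_right_mono member_le_sum) auto
    finally show ?thesis .
  qed
  have partial_sum: "ennreal (\<Sum>m\<le>n. P m) \<le> chaining_majorant B t c" for n
  proof -
    have "ennreal (\<Sum>m\<le>n. P m) = (\<Sum>m<Suc n. ennreal (P m))"
      using \<open>\<And>m. 0 \<le> P m\<close> by (simp add: sum_ennreal lessThan_Suc_atMost)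
    also have "\<dots> \<le> chaining_majorant B t c"
      unfolding chaining_majorant_def P_def by (rule sum_le_suminf) auto
    finally show ?thesis .
  qed
  have "(\<Sum>m\<le>n. P m) \<le> g" for n
    using enn2real_mono[OF partial_sum] False \<open>\<And>m. 0 \<le> P m\<close>
    unfolding g_def by (simp add: top.not_eq_extremum sum_nonneg)
  then have "\<bar>B (t * real k / 2 ^ n)\<bar> \<le> g" if "k \<le> 2 ^ n" for n k
    using abs_dyadic_le_sum_increment_bounds[OF \<open>B 0 = 0\<close> incr that] by (meson order_trans)
  then have "\<bar>B r\<bar> \<le> g"
    using abs_le_if_abs_le_on_dyadics[OF assms(1,2) _ assms(5)] by blast
  then show ?thesis
    using ennreal_leI False unfolding g_def by (fastforce simp: ennreal_enn2real_if)
qed simp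

lemma brownian_motion_drift_prob_space:
  "brownian_motion_drift M chi x a \<sigma> \<Longrightarrow> prob_space M"
  by (simp add: brownian_motion_drift_def)

lemma brownian_motion_drift_measurable:
  "brownian_motion_drift M chi x a \<sigma> \<Longrightarrow> u \<ge> 0 \<Longrightarrow> chi u \<in> borel_measurable M"
  by (simp add: brownian_motion_drift_def)

lemma brownian_motion_drift_start:
  "brownian_motion_drift M chi x a \<sigma> \<Longrightarrow> \<omega> \<in> space M \<Longrightarrow> chi 0 \<omega> = x"
  by (simp add: brownian_motion_drift_def)

lemma brownian_motion_drift_continuous:
  "brownian_motion_drift M chi x a \<sigma> \<Longrightarrow> \<omega> \<in> space M \<Longrightarrow> continuous_on {0..} (\<lambda>u. chi u \<omega>)"
  by (simp add: brownian_motion_drift_def)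

lemma brownian_motion_drift_increment_distributed:
  "brownian_motion_drift M chi x a \<sigma> \<Longrightarrow> 0 \<le> s \<Longrightarrow> s < u \<Longrightarrow>
    distributed M lborel (\<lambda>\<omega>. chi u \<omega> - chi s \<omega>)
      (\<lambda>y. ennreal (normal_density (a * (u - s)) (\<sigma> * sqrt (u - s)) y))"
  by (simp add: brownian_motion_drift_def)

lemma distributed_normal_fourth_central_moment:
  fixes X :: "'w \<Rightarrow> real"
  assumes X: "distributed M lborel X (\<lambda>y. ennreal (normal_density \<mu> s y))" and "s > 0"
  shows "integrable M (\<lambda>\<omega>. (X \<omega> - \<mu>) ^ 4)" and "(\<integral>\<omega>. (X \<omega> - \<mu>) ^ 4 \<partial>M) = 3 * s ^ 4"
proof -
  have moment: "has_bochner_integral lborel (\<lambda>y. normal_density \<mu> s y * (y - \<mu>) ^ 4) (3 * s ^ 4)"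
    using normal_moment_even[OF \<open>s > 0\<close>, of \<mu> 2] \<open>s > 0\<close>
    by (simp add: fact_numeral field_simps power2_eq_square eval_nat_numeral)
  then show "integrable M (\<lambda>\<omega>. (X \<omega> - \<mu>) ^ 4)"
    using distributed_integrable[OF X, of "\<lambda>y. (y - \<mu>) ^ 4"] by (simp add: has_bochner_integral_iff)
  show "(\<integral>\<omega>. (X \<omega> - \<mu>) ^ 4 \<partial>M) = 3 * s ^ 4"
    using distributed_integral[OF X, of "\<lambda>y. (y - \<mu>) ^ 4"] moment by (simp add: has_bochner_integral_iff)
qed

lemma brownian_motion_drift_increment_fourth_moment:
  assumes BM: "brownian_motion_drift M chi x a \<sigma>" and "\<sigma> > 0" "0 \<le> s" "s < u"
  shows "integrable M (\<lambda>\<omega>. (chi u \<omega> - chi s \<omega> - a * (u - s)) ^ 4)"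
    and "(\<integral>\<omega>. (chi u \<omega> - chi s \<omega> - a * (u - s)) ^ 4 \<partial>M) = 3 * \<sigma> ^ 4 * (u - s) ^ 2"
proof -
  have "\<sigma> * sqrt (u - s) > 0" using \<open>\<sigma> > 0\<close> \<open>s < u\<close> by simp
  note moment = distributed_normal_fourth_central_moment[OF
      brownian_motion_drift_increment_distributed[OF BM \<open>0 \<le> s\<close> \<open>s < u\<close>] this]
  show "integrable M (\<lambda>\<omega>. (chi u \<omega> - chi s \<omega> - a * (u - s)) ^ 4)"
    by (rule moment(1))
  have "sqrt (u - s) ^ 4 = (sqrt (u - s) ^ 2) ^ 2"
    by (simp flip: power_mult)
  then have "(\<sigma> * sqrt (u - s)) ^ 4 = \<sigma> ^ 4 * (u - s) ^ 2"
    using \<open>s < u\<close> by (simp add: power_mult_distrib)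
  then show "(\<integral>\<omega>. (chi u \<omega> - chi s \<omega> - a * (u - s)) ^ 4 \<partial>M) = 3 * \<sigma> ^ 4 * (u - s) ^ 2"
    using moment(2) by simp
qed

lemma dyadic_chaining_level_identity:
  fixes \<sigma> t :: real
  assumes "\<sigma> > 0" "t > 0"
  shows "2 ^ m * (3 * \<sigma> ^ 4 * (t / 2 ^ m) ^ 2) / (\<sigma> * sqrt t * (4/5) ^ m) ^ 3
           = 3 * \<sigma> * sqrt t * (125/128) ^ m"
proof -
  have t: "t = sqrt t ^ 2" using assms by simp
  have "((4/5::real) ^ m) ^ 3 = ((4/5) ^ 3) ^ m"
    by (metis power_mult mult.commute)
  then have "(125/128::real) ^ m * (2 ^ m * ((4/5) ^ m) ^ 3) = (125/128 * (2 * (4/5) ^ 3)) ^ m"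
    by (simp only: power_mult_distrib)
  also have "\<dots> = 1" by (simp add: eval_nat_numeral)
  finally have "(125/128::real) ^ m * (2 ^ m * ((4/5) ^ m) ^ 3) = 1" .
  then show ?thesis
    using assms by (subst (1 2) t) (simp add: field_simps power2_eq_square eval_nat_numeral)
qed

lemma brownian_motion_drift_dyadic_increment:
  fixes m j :: nat
  assumes BM: "brownian_motion_drift M chi x a \<sigma>" and "\<sigma> > 0" "t > 0"
  defines "D \<equiv> \<lambda>\<omega>. dyadic_increment (\<lambda>u. chi u \<omega> - x - a * u) t m j"
  shows "D \<in> borel_measurable M" and "integrable M (\<lambda>\<omega>. D \<omega> ^ 4)"
    and "(\<integral>\<omega>. D \<omega> ^ 4 \<partial>M) = 3 * \<sigma> ^ 4 * (t / 2 ^ m) ^ 2"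
proof -
  define s where "s = t * real j / 2 ^ m"
  define u where "u = t * real (Suc j) / 2 ^ m"
  have "0 \<le> s" "u - s = t / 2 ^ m" unfolding s_def u_def using \<open>t > 0\<close> by (simp_all add: field_simps)
  moreover have "0 < t / 2 ^ m" using \<open>t > 0\<close> by simp
  ultimately have "s < u" by linarith
  have D_eq: "D = (\<lambda>\<omega>. chi u \<omega> - chi s \<omega> - a * (u - s))"
    unfolding D_def dyadic_increment_def s_def[symmetric] u_def[symmetric] by (simp add: algebra_simps)
  show "D \<in> borel_measurable M"
    unfolding D_eq using brownian_motion_drift_measurable[OF BM] \<open>0 \<le> s\<close> \<open>s < u\<close> by simp
  show "integrable M (\<lambda>\<omega>. D \<omega> ^ 4)" "(\<integral>\<omega>. D \<omega> ^ 4 \<partial>M) = 3 * \<sigma> ^ 4 * (t / 2 ^ m) ^ 2"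
    unfolding D_eq using brownian_motion_drift_increment_fourth_moment[OF BM \<open>\<sigma> > 0\<close> \<open>0 \<le> s\<close> \<open>s < u\<close>]
    by (simp_all add: \<open>u - s = t / 2 ^ m\<close>)
qed

lemma brownian_motion_drift_chaining_majorant:
  assumes BM: "brownian_motion_drift M chi x a \<sigma>" and "\<sigma> > 0" "t > 0"
  defines "G \<equiv> \<lambda>\<omega>. chaining_majorant (\<lambda>u. chi u \<omega> - x - a * u) t (\<lambda>m. \<sigma> * sqrt t * (4/5) ^ m)"
  shows "G \<in> borel_measurable M" and "(\<integral>\<^sup>+\<omega>. G \<omega> \<partial>M) = ennreal (133 * \<sigma> * sqrt t)"
proof -
  interpret prob_space M using brownian_motion_drift_prob_space[OF BM] .
  (* With these weights level m contributes \<sigma> sqrt t ((4/5)^m + 3 (125/128)^m) in expectation,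
     and the two geometric series sum to 5 + 128 = 133. *)
  define c where "c m = \<sigma> * sqrt t * (4/5) ^ m" for m :: nat
  define D where "D m j \<omega> = dyadic_increment (\<lambda>u. chi u \<omega> - x - a * u) t m j" for m j \<omega>
  define P where "P m \<omega> = c m + (\<Sum>j<2 ^ m. D m j \<omega> ^ 4) / c m ^ 3" for m \<omega>
  note increment = brownian_motion_drift_dyadic_increment[OF BM \<open>\<sigma> > 0\<close> \<open>t > 0\<close>, folded D_def]
  have G_eq: "G \<omega> = (\<Sum>m. ennreal (P m \<omega>))" for \<omega>
    unfolding G_def chaining_majorant_def P_def c_def D_def ..
  have P_measurable: "P m \<in> borel_measurable M" for m
    unfolding P_def[abs_def] using increment(1) by measurable
  then show "G \<in> borel_measurable M"
    unfolding G_eq[abs_def] by measurable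
  have "c m > 0" for m unfolding c_def using \<open>\<sigma> > 0\<close> \<open>t > 0\<close> by simp
  have "integrable M (\<lambda>\<omega>. P m \<omega>)" for m
    unfolding P_def using increment(2) by (auto intro!: integrable_sum)
  moreover have "0 \<le> P m \<omega>" for m \<omega>
    unfolding P_def using \<open>c m > 0\<close> by (intro add_nonneg_nonneg sum_nonneg divide_nonneg_pos) auto
  moreover have "(\<integral>\<omega>. P m \<omega> \<partial>M) = \<sigma> * sqrt t * ((4/5) ^ m + 3 * (125/128) ^ m)" for m
  proof -
    have "(\<integral>\<omega>. P m \<omega> \<partial>M) = c m + 2 ^ m * (3 * \<sigma> ^ 4 * (t / 2 ^ m) ^ 2) / c m ^ 3"
      unfolding P_def using increment(2,3) by (simp add: integral_sum prob_space)
    then show ?thesis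
      using dyadic_chaining_level_identity[OF \<open>\<sigma> > 0\<close> \<open>t > 0\<close>, of m]
      by (simp add: c_def algebra_simps)
  qed
  ultimately have expectation:
    "(\<integral>\<^sup>+\<omega>. ennreal (P m \<omega>) \<partial>M) = ennreal (\<sigma> * sqrt t * ((4/5) ^ m + 3 * (125/128) ^ m))" for m
    by (simp add: nn_integral_eq_integral)
  have "(\<lambda>m. (4/5::real) ^ m + 3 * (125/128) ^ m) sums (5 + 3 * (128/3))"
    using geometric_sums[of "4/5::real"] geometric_sums[of "125/128::real"] by (intro sums_add sums_mult) auto
  from sums_mult[OF this, of "\<sigma> * sqrt t"]
  have sums: "(\<lambda>m. \<sigma> * sqrt t * ((4/5) ^ m + 3 * (125/128) ^ m)) sums (133 * \<sigma> * sqrt t)"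
    by (simp add: mult_ac)
  have "(\<integral>\<^sup>+\<omega>. G \<omega> \<partial>M) = (\<Sum>m. \<integral>\<^sup>+\<omega>. ennreal (P m \<omega>) \<partial>M)"
    unfolding G_eq using P_measurable by (intro nn_integral_suminf) measurable
  also have "\<dots> = ennreal (133 * \<sigma> * sqrt t)"
    unfolding expectation using sums \<open>\<sigma> > 0\<close> \<open>t > 0\<close>
    by (subst suminf_ennreal2) (auto simp: sums_iff)
  finally show "(\<integral>\<^sup>+\<omega>. G \<omega> \<partial>M) = ennreal (133 * \<sigma> * sqrt t)" .
qed

lemma brownian_motion_drift_maximal_inequality:
  assumes BM: "brownian_motion_drift M chi x a \<sigma>" and "\<sigma> > 0" "t \<ge> 0"
  obtains G :: "'w \<Rightarrow> ennreal"
  where "G \<in> borel_measurable M" "(\<integral>\<^sup>+\<omega>. G \<omega> \<partial>M) \<le> ennreal (133 * \<sigma> * sqrt t)"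
    and "\<And>\<omega> r. \<omega> \<in> space M \<Longrightarrow> r \<in> {0..t} \<Longrightarrow> ennreal \<bar>chi r \<omega> - x - a * r\<bar> \<le> G \<omega>"
proof (cases "t = 0")
  case True
  show ?thesis
  proof (rule that[of "\<lambda>_. 0"])
    fix \<omega> r assume "\<omega> \<in> space M" "r \<in> {0..t}"
    then show "ennreal \<bar>chi r \<omega> - x - a * r\<bar> \<le> 0"
      using True brownian_motion_drift_start[OF BM] by simp
  qed (rule borel_measurable_const, simp)
next
  case False
  then have "t > 0" using \<open>t \<ge> 0\<close> by simp
  define G where "G \<omega> = chaining_majorant (\<lambda>u. chi u \<omega> - x - a * u) t (\<lambda>m. \<sigma> * sqrt t * (4/5) ^ m)" for \<omega>
  note majorant = brownian_motion_drift_chaining_majorant[OF BM \<open>\<sigma> > 0\<close> \<open>t > 0\<close>, folded G_def]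
  show ?thesis
  proof (rule that[of G])
    show "G \<in> borel_measurable M" by (rule majorant(1))
    show "(\<integral>\<^sup>+\<omega>. G \<omega> \<partial>M) \<le> ennreal (133 * \<sigma> * sqrt t)" by (simp add: majorant(2))
    fix \<omega> r assume "\<omega> \<in> space M" "r \<in> {0..t}"
    have "continuous_on {0..t} (\<lambda>u. chi u \<omega>)"
      using brownian_motion_drift_continuous[OF BM \<open>\<omega> \<in> space M\<close>]
      by (rule continuous_on_subset) auto
    then have "continuous_on {0..t} (\<lambda>u. chi u \<omega> - x - a * u)"
      by (intro continuous_intros)
    then show "ennreal \<bar>chi r \<omega> - x - a * r\<bar> \<le> G \<omega>"
      unfolding G_def using \<open>t > 0\<close> \<open>\<sigma> > 0\<close> \<open>r \<in> {0..t}\<close> brownian_motion_drift_start[OF BM \<open>\<omega> \<in> space M\<close>]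
      by (intro abs_le_chaining_majorant[where B = "\<lambda>u. chi u \<omega> - x - a * u"]) auto
  qed
qed

lemma integrable_le_brownian_motion_drift_increment:
  fixes Z :: "'w \<Rightarrow> real"
  assumes BM: "brownian_motion_drift M chi x a \<sigma>" and "\<sigma> > 0" "t \<ge> 0" "K \<ge> 0"
    and "Z \<in> borel_measurable M" "\<And>\<omega>. \<omega> \<in> space M \<Longrightarrow> 0 \<le> Z \<omega>"
    and Z_le: "\<And>\<omega>. \<omega> \<in> space M \<Longrightarrow> \<exists>s\<in>{0..t}. Z \<omega> \<le> K + (chi t \<omega> - a * t) - (chi s \<omega> - a * s)"
  shows "integrable M Z" and "(\<integral>\<omega>. Z \<omega> \<partial>M) \<le> K + 266 * \<sigma> * sqrt t"
proof -
  interpret prob_space M using brownian_motion_drift_prob_space[OF BM] .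
  obtain G where G: "G \<in> borel_measurable M" "(\<integral>\<^sup>+\<omega>. G \<omega> \<partial>M) \<le> ennreal (133 * \<sigma> * sqrt t)"
    and abs_le_G: "\<And>\<omega> r. \<omega> \<in> space M \<Longrightarrow> r \<in> {0..t} \<Longrightarrow> ennreal \<bar>chi r \<omega> - x - a * r\<bar> \<le> G \<omega>"
    using brownian_motion_drift_maximal_inequality[OF BM \<open>\<sigma> > 0\<close> \<open>t \<ge> 0\<close>] by blast
  have "ennreal (Z \<omega>) \<le> ennreal K + 2 * G \<omega>" if \<omega>: "\<omega> \<in> space M" for \<omega>
  proof -
    obtain s where "s \<in> {0..t}" "Z \<omega> \<le> K + (chi t \<omega> - a * t) - (chi s \<omega> - a * s)"
      using Z_le[OF \<omega>] by blast
    then have "Z \<omega> \<le> K + \<bar>chi t \<omega> - x - a * t\<bar> + \<bar>chi s \<omega> - x - a * s\<bar>" by linarith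
    then have "ennreal (Z \<omega>) \<le> ennreal K + ennreal \<bar>chi t \<omega> - x - a * t\<bar> + ennreal \<bar>chi s \<omega> - x - a * s\<bar>"
      using \<open>K \<ge> 0\<close> by (simp add: ennreal_leI flip: ennreal_plus)
    also have "\<dots> \<le> ennreal K + G \<omega> + G \<omega>"
      using abs_le_G[OF \<omega>] \<open>s \<in> {0..t}\<close> \<open>t \<ge> 0\<close> by (intro add_mono) auto
    finally show ?thesis by (simp add: mult_2 add.assoc)
  qed
  then have "(\<integral>\<^sup>+\<omega>. ennreal (Z \<omega>) \<partial>M) \<le> (\<integral>\<^sup>+\<omega>. ennreal K + 2 * G \<omega> \<partial>M)"
    by (intro nn_integral_mono) auto
  also have "\<dots> = ennreal K + 2 * (\<integral>\<^sup>+\<omega>. G \<omega> \<partial>M)"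
    using G(1) by (simp add: nn_integral_add nn_integral_cmult emeasure_space_1)
  also have "\<dots> \<le> ennreal K + ennreal (2 * (133 * \<sigma> * sqrt t))"
    using mult_left_mono[OF G(2), of 2] \<open>\<sigma> > 0\<close> \<open>t \<ge> 0\<close>
    by (intro add_left_mono) (subst ennreal_mult', simp_all)
  also have "\<dots> = ennreal (K + 266 * \<sigma> * sqrt t)"
    using \<open>K \<ge> 0\<close> \<open>\<sigma> > 0\<close> \<open>t \<ge> 0\<close> by (simp flip: ennreal_plus)
  finally have nn_Z: "(\<integral>\<^sup>+\<omega>. ennreal (Z \<omega>) \<partial>M) \<le> ennreal (K + 266 * \<sigma> * sqrt t)" .
  then show "integrable M Z"
    using assms(5,6) by (intro integrableI_nonneg) (auto simp: top.not_eq_extremum le_less_trans)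
  then have "(\<integral>\<^sup>+\<omega>. ennreal (Z \<omega>) \<partial>M) = ennreal (\<integral>\<omega>. Z \<omega> \<partial>M)"
    using assms(6) by (intro nn_integral_eq_integral AE_I2) auto
  with nn_Z have "ennreal (\<integral>\<omega>. Z \<omega> \<partial>M) \<le> ennreal (K + 266 * \<sigma> * sqrt t)" by (simp only:)
  moreover have "0 \<le> K + 266 * \<sigma> * sqrt t" using \<open>K \<ge> 0\<close> \<open>\<sigma> > 0\<close> \<open>t \<ge> 0\<close> by simp
  ultimately show "(\<integral>\<omega>. Z \<omega> \<partial>M) \<le> K + 266 * \<sigma> * sqrt t" by (simp only: ennreal_le_iff)
qed

lemma last_time_at_most:
  fixes w :: "real \<Rightarrow> real"
  assumes "continuous_on {0..t} w" "0 \<le> t" "w 0 \<le> K"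
  obtains s where "s \<in> {0..t}" "w s \<le> K" "\<And>u. u \<in> {s<..t} \<Longrightarrow> K < w u" "s < t \<Longrightarrow> K \<le> w s"
proof -
  define S where "S = {0..t} \<inter> w -` {..K}"
  have "closed S"
    unfolding S_def using assms(1) by (rule continuous_closed_preimage) auto
  moreover have "0 \<in> S" "bdd_above S"
    unfolding S_def using assms(2,3) by (auto intro: bdd_aboveI[of _ t])
  ultimately have "Sup S \<in> S"
    using closed_contains_Sup by blast
  then have s: "Sup S \<in> {0..t}" "w (Sup S) \<le> K" unfolding S_def by auto
  have above: "K < w u" if "u \<in> {Sup S<..t}" for u
  proof (rule ccontr)
    assume "\<not> K < w u"
    then have "u \<in> S" unfolding S_def using that s(1) by auto
    then show False using that cSup_upper[OF _ \<open>bdd_above S\<close>] by fastforce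
  qed
  have "K \<le> w (Sup S)" if "Sup S < t"
  proof (rule tendsto_lowerbound)
    have "continuous_on {Sup S..t} w" using assms(1) by (rule continuous_on_subset) (use s(1) in auto)
    then show "(w \<longlongrightarrow> w (Sup S)) (at_right (Sup S))" using that by (rule continuous_on_Icc_at_rightD)
    show "\<forall>\<^sub>F u in at_right (Sup S). K \<le> w u"
      using that above unfolding eventually_at_right[OF that] by (auto intro!: exI[of _ t] less_imp_le)
  qed simp
  show ?thesis using that[OF s above] \<open>Sup S < t \<Longrightarrow> K \<le> w (Sup S)\<close> by blast
qed

lemma reflected_path_le_level_plus_increment:
  fixes w l ch f :: "real \<Rightarrow> real"
  assumes "0 \<le> t" "0 < K" "w 0 \<le> K"
    and "continuous_on {0..t} w" "continuous_on {0..} f"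
    and dynamics: "\<And>u. u \<in> {0..t} \<Longrightarrow> w u = ch u - integral {0..u} (\<lambda>v. f (w v)) + l u"
    and nonneg: "\<And>u. u \<in> {0..t} \<Longrightarrow> 0 \<le> w u"
    and regulator: "\<And>s u. 0 \<le> s \<Longrightarrow> s < u \<Longrightarrow> u \<le> t \<Longrightarrow> (\<forall>v\<in>{s..u}. 0 < w v) \<Longrightarrow> l u = l s"
    and drift: "\<And>y. K \<le> y \<Longrightarrow> a \<le> f y"
  shows "\<exists>s\<in>{0..t}. w t \<le> K + (ch t - a * t) - (ch s - a * s)"
proof -
  obtain s where s: "s \<in> {0..t}" "w s \<le> K"
    and above: "\<And>u. u \<in> {s<..t} \<Longrightarrow> K < w u" and "s < t \<Longrightarrow> K \<le> w s"
    using last_time_at_most[OF assms(4,1,3)] by blast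
  show ?thesis
  proof (cases "s = t")
    case True
    then show ?thesis using s by (intro bexI[of _ t]) auto
  next
    case False
    then have "s < t" using s(1) by simp
    have high: "K \<le> w u" if "u \<in> {s..t}" for u
      using that above[of u] \<open>s < t \<Longrightarrow> K \<le> w s\<close> \<open>s < t\<close> by (cases "u = s") auto
    have "l t = l s"
      using high \<open>0 < K\<close> s(1) \<open>s < t\<close> by (intro regulator) (auto intro: less_le_trans)
    have "continuous_on {0..t} (\<lambda>v. f (w v))"
      using nonneg by (intro continuous_on_compose2[OF assms(5,4)]) auto
    then have "(\<lambda>v. f (w v)) integrable_on {0..t}" by (rule integrable_continuous_real)
    then have split: "integral {0..t} (\<lambda>v. f (w v)) = integral {0..s} (\<lambda>v. f (w v)) + integral {s..t} (\<lambda>v. f (w v))"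
      and "(\<lambda>v. f (w v)) integrable_on {s..t}"
      using s(1) by (simp_all add: Henstock_Kurzweil_Integration.integral_combine integrable_subinterval_real)
    then have "a * (t - s) \<le> integral {s..t} (\<lambda>v. f (w v))"
      using integral_le[OF integrable_const_ivl \<open>(\<lambda>v. f (w v)) integrable_on {s..t}\<close>, of a] high drift \<open>s < t\<close>
      by (simp add: mult.commute)
    moreover have "w t - w s = ch t - ch s - integral {s..t} (\<lambda>v. f (w v))"
      using dynamics[of t] dynamics[of s] s(1) \<open>s < t\<close> split \<open>l t = l s\<close> by simp
    ultimately show ?thesis
      using s by (intro bexI[of _ s]) (auto simp: algebra_simps)
  qed
qed

lemma workload_processD:
  assumes "workload_process M chi \<eta> \<theta> W L" "\<omega> \<in> space M"
  shows "continuous_on {0..} (\<lambda>t. W t \<omega>)"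
    and "\<And>t. 0 \<le> t \<Longrightarrow> W t \<omega> = chi t \<omega> - \<eta> * integral {0..t} (\<lambda>s. W s \<omega>)
                                   - integral {0..t} (\<lambda>s. \<theta> (W s \<omega>)) + L t \<omega>"
    and "\<And>t. 0 \<le> t \<Longrightarrow> 0 \<le> W t \<omega>"
    and "L 0 \<omega> = 0"
    and "\<And>s t. 0 \<le> s \<Longrightarrow> s < t \<Longrightarrow> \<forall>u\<in>{s..t}. 0 < W u \<omega> \<Longrightarrow> L t \<omega> = L s \<omega>"
  using bspec[OF conjunct2[OF assms(1)[unfolded workload_process_def]] assms(2)] by blast+

lemma workload_process_measurable:
  "workload_process M chi \<eta> \<theta> W L \<Longrightarrow> 0 \<le> t \<Longrightarrow> W t \<in> borel_measurable M"
  by (simp add: workload_process_def)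

lemma workload_process_dynamics:
  assumes W: "workload_process M chi \<eta> \<theta> W L" and "continuous_on {0..} \<theta>"
    and \<omega>: "\<omega> \<in> space M" and "0 \<le> u"
  shows "W u \<omega> = chi u \<omega> - integral {0..u} (\<lambda>v. \<eta> * W v \<omega> + \<theta> (W v \<omega>)) + L u \<omega>"
proof -
  have "continuous_on {0..u} (\<lambda>v. W v \<omega>)"
    using workload_processD(1)[OF W \<omega>] by (rule continuous_on_subset) auto
  moreover have "continuous_on ((\<lambda>v. W v \<omega>) ` {0..u}) \<theta>"
    using assms(2) by (rule continuous_on_subset) (simp add: image_subset_iff workload_processD(3)[OF W \<omega>])
  ultimately have "continuous_on {0..u} (\<lambda>v. \<theta> (W v \<omega>))"
    using continuous_on_compose[of "{0..u}" "\<lambda>v. W v \<omega>" \<theta>] by (simp add: o_def)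
  with \<open>continuous_on {0..u} (\<lambda>v. W v \<omega>)\<close>
  have "(\<lambda>v. \<eta> * W v \<omega>) integrable_on {0..u}" "(\<lambda>v. \<theta> (W v \<omega>)) integrable_on {0..u}"
    by (auto intro!: integrable_continuous_real continuous_intros)
  then have "integral {0..u} (\<lambda>v. \<eta> * W v \<omega> + \<theta> (W v \<omega>))
      = \<eta> * integral {0..u} (\<lambda>v. W v \<omega>) + integral {0..u} (\<lambda>v. \<theta> (W v \<omega>))"
    by (simp add: integral_add)
  then show ?thesis using workload_processD(2)[OF W \<omega> \<open>0 \<le> u\<close>] by simp
qed

lemma workload_process_le_level_plus_increment:
  assumes BM: "brownian_motion_drift M chi x a \<sigma>" and W: "workload_process M chi \<eta> \<theta> W L"
    and "continuous_on {0..} \<theta>" and drift: "\<And>y. K \<le> y \<Longrightarrow> a \<le> \<eta> * y + \<theta> y"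
    and "x \<le> K" "0 < K" and \<omega>: "\<omega> \<in> space M" and "0 \<le> t"
  shows "\<exists>s\<in>{0..t}. W t \<omega> \<le> K + (chi t \<omega> - a * t) - (chi s \<omega> - a * s)"
proof (rule reflected_path_le_level_plus_increment[where f = "\<lambda>y. \<eta> * y + \<theta> y"])
  show "W 0 \<omega> \<le> K"
    using workload_processD(2)[OF W \<omega>, of 0] workload_processD(4)[OF W \<omega>]
      brownian_motion_drift_start[OF BM \<omega>] \<open>x \<le> K\<close> by simp
  show "continuous_on {0..t} (\<lambda>u. W u \<omega>)"
    using workload_processD(1)[OF W \<omega>] by (rule continuous_on_subset) auto
  show "continuous_on {0..} (\<lambda>y. \<eta> * y + \<theta> y)" using assms(3) by (intro continuous_intros)
  show "\<And>u. u \<in> {0..t} \<Longrightarrow> W u \<omega> = chi u \<omega> - integral {0..u} (\<lambda>v. \<eta> * W v \<omega> + \<theta> (W v \<omega>)) + L u \<omega>"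
    using workload_process_dynamics[OF W assms(3) \<omega>] by simp
  show "\<And>u. u \<in> {0..t} \<Longrightarrow> 0 \<le> W u \<omega>" using workload_processD(3)[OF W \<omega>] by simp
  show "\<And>s u. 0 \<le> s \<Longrightarrow> s < u \<Longrightarrow> u \<le> t \<Longrightarrow> \<forall>v\<in>{s..u}. 0 < W v \<omega> \<Longrightarrow> L u \<omega> = L s \<omega>"
    by (rule workload_processD(5)[OF W \<omega>])
qed (fact drift \<open>0 \<le> t\<close> \<open>0 < K\<close>)+

lemma workload_process_expectation_le:
  assumes BM: "brownian_motion_drift M chi x a \<sigma>" and "\<sigma> > 0" "\<eta> > 0"
    and W: "workload_process M chi \<eta> \<theta> W L"
    and "continuous_on {0..} \<theta>" "\<And>y. 0 \<le> y \<Longrightarrow> - c \<le> \<theta> y"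
  obtains K where "\<And>t. 0 \<le> t \<Longrightarrow> integrable M (W t)"
    and "\<And>t. 0 \<le> t \<Longrightarrow> 0 \<le> (\<integral>\<omega>. W t \<omega> \<partial>M)"
    and "\<And>t. 0 \<le> t \<Longrightarrow> (\<integral>\<omega>. W t \<omega> \<partial>M) \<le> K + 266 * \<sigma> * sqrt t"
proof -
  interpret prob_space M using brownian_motion_drift_prob_space[OF BM] .
  define K where "K = \<bar>x\<bar> + (\<bar>a\<bar> + \<bar>c\<bar>) / \<eta> + 1"
  have "0 \<le> (\<bar>a\<bar> + \<bar>c\<bar>) / \<eta>" using \<open>\<eta> > 0\<close> by simp
  then have "x \<le> K" "0 < K" unfolding K_def by linarith+
  have drift: "a \<le> \<eta> * y + \<theta> y" if "K \<le> y" for y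
  proof -
    have "\<eta> * K = \<eta> * (\<bar>x\<bar> + 1) + (\<bar>a\<bar> + \<bar>c\<bar>)"
      unfolding K_def using \<open>\<eta> > 0\<close> by (simp add: field_simps)
    moreover have "0 \<le> \<eta> * (\<bar>x\<bar> + 1)" using \<open>\<eta> > 0\<close> by simp
    ultimately have "c + a \<le> \<eta> * K" using abs_ge_self[of a] abs_ge_self[of c] by linarith
    also have "\<dots> \<le> \<eta> * y" using that \<open>\<eta> > 0\<close> by simp
    finally show ?thesis using assms(6)[of y] that \<open>0 < K\<close> by linarith
  qed
  show ?thesis
  proof (rule that)
    fix t :: real assume "0 \<le> t"
    note bound = integrable_le_brownian_motion_drift_increment[OF BM \<open>\<sigma> > 0\<close> \<open>0 \<le> t\<close> _
        workload_process_measurable[OF W \<open>0 \<le> t\<close>] workload_processD(3)[OF W _ \<open>0 \<le> t\<close>]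
        workload_process_le_level_plus_increment[OF BM W assms(5) drift \<open>x \<le> K\<close> \<open>0 < K\<close> _ \<open>0 \<le> t\<close>]]
    show "integrable M (W t)" using bound(1) \<open>0 < K\<close> by simp
    show "(\<integral>\<omega>. W t \<omega> \<partial>M) \<le> K + 266 * \<sigma> * sqrt t" using bound(2) \<open>0 < K\<close> by simp
    show "0 \<le> (\<integral>\<omega>. W t \<omega> \<partial>M)"
      using workload_processD(3)[OF W _ \<open>0 \<le> t\<close>] by (simp add: integral_nonneg)
  qed
qed

lemma admissible_workloadI_sqrt_growth:
  assumes "\<And>t. 0 \<le> t \<Longrightarrow> integrable M (W t)"
    and "\<And>t. 0 \<le> t \<Longrightarrow> 0 \<le> (\<integral>\<omega>. W t \<omega> \<partial>M)"
    and "\<And>t. 0 \<le> t \<Longrightarrow> (\<integral>\<omega>. W t \<omega> \<partial>M) \<le> K + C * sqrt t"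
  shows "admissible_workload M W"
  unfolding admissible_workload_def
proof (intro conjI allI impI assms(1))
  show "((\<lambda>t. (\<integral>\<omega>. W t \<omega> \<partial>M) / t) \<longlongrightarrow> 0) at_top"
  proof (rule tendsto_sandwich[where f = "\<lambda>_. 0" and h = "\<lambda>t. (K + C * sqrt t) / t"])
    show "\<forall>\<^sub>F t in at_top. 0 \<le> (\<integral>\<omega>. W t \<omega> \<partial>M) / t"
      using eventually_ge_at_top[of 0] by eventually_elim (simp add: assms(2))
    show "\<forall>\<^sub>F t in at_top. (\<integral>\<omega>. W t \<omega> \<partial>M) / t \<le> (K + C * sqrt t) / t"
      using eventually_ge_at_top[of 0] by eventually_elim (simp add: assms(3) divide_right_mono)
    show "((\<lambda>t. (K + C * sqrt t) / t) \<longlongrightarrow> 0) at_top" by real_asymp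
  qed simp
qed

theorem proposition3:
  fixes M :: "'w measure" and chi W L :: "real \<Rightarrow> 'w \<Rightarrow> real"
    and \<sigma> \<eta> \<alpha> h r a x \<beta> :: real and v v' \<theta> :: "real \<Rightarrow> real"
  assumes "\<sigma> > 0" "\<eta> > 0" "\<alpha> > 0" "h > 0" "r \<ge> 0" "x \<ge> 0"
    and "brownian_motion_drift M chi x a \<sigma>"
    and "\<beta> > 0"
    and "\<And>y. y \<ge> 0 \<Longrightarrow> (v has_real_derivative v' y) (at y within {0..})"
    and "continuous_on {0..} v'"
    and "\<And>y. y \<ge> 0 \<Longrightarrow>
           \<beta> = - (\<alpha> / 4) * (v y)\<^sup>2 + (1/2) * \<sigma>\<^sup>2 * v' y - \<eta> * y * v y + a * v y + h * y"
    and "v 0 = - r"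
    and "mono_on {0..} v"
    and "(v \<longlongrightarrow> h / \<eta>) at_top"
    and "\<And>w. \<theta> w = (\<alpha> / 2) * v w"
    and "workload_process M chi \<eta> \<theta> W L"
  shows "admissible_workload M W"
proof -
  have "continuous_on {0..} v"
    using assms(9) by (auto simp: continuous_on_eq_continuous_within intro: DERIV_continuous)
  then have "continuous_on {0..} \<theta>"
    unfolding assms(15)[abs_def] by (intro continuous_intros)
  moreover have "- (\<alpha> * r / 2) \<le> \<theta> y" if "0 \<le> y" for y
    using mult_left_mono[of "- r" "v y" \<alpha>] mono_onD[OF assms(13), of 0 y] that \<open>\<alpha> > 0\<close> \<open>v 0 = - r\<close>
    unfolding assms(15) by simp
  ultimately obtain K
    where "\<And>t. 0 \<le> t \<Longrightarrow> integrable M (W t)"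
      and "\<And>t. 0 \<le> t \<Longrightarrow> 0 \<le> (\<integral>\<omega>. W t \<omega> \<partial>M)"
      and "\<And>t. 0 \<le> t \<Longrightarrow> (\<integral>\<omega>. W t \<omega> \<partial>M) \<le> K + 266 * \<sigma> * sqrt t"
    using workload_process_expectation_le[OF assms(7,1,2,16)] by blast
  then show ?thesis by (rule admissible_workloadI_sqrt_growth)
qed

end
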